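(* For all $p\in[0,1]$ and all $n\geq 1$ one has $$P^{\rm Ab}_n(p)\leq P^{\rm AB}_n(p)\qquad\text{and}\qquad P^{\rm aB}_n(p)\geq P^{\rm AB}_n(p).$$
   Context: Fix $n\geq1$. Two players, Alice and Bob, alternately make moves, Alice first, each making $n$ moves; every move is a choice from $\{1,2\}$. Write Alice's moves as $a=(a_1,\dots,a_n)$ and Bob's as $b=(b_1,\dots,b_n)$, and let $|a|_1:=\#\{k:a_k=1\}$, $|b|_1:=\#\{k:b_k=1\}$. Four games are defined by what the outcome of the game is: - in ${\rm AB}_n(p)$ the outcome is $(a,b)$; - in ${\rm Ab}_n(p)$ it is $(a,|b|_1)$; - in ${\rm aB}_n(p)$ it is $(|a|_1,b)$; - in ${\rm ab}_n(p)$ it is $(|a|_1,|b|_1)$. To each possible outcome a winner is assigned independently at random: Bob with probability $p$, Alice with probability $1-p$. The players know this assignment and all previous moves. A winning strategy for Bob is a rule choosing each of his moves as a function of the previous moves that guarantees the outcome is a win for Bob whatever Alice plays. $P^{\rm xx}_n(p)$ (for ${\rm xx}\in\{{\rm AB},{\rm Ab},{\rm aB},{\rm ab}\}$) is the probability that Bob has a winning strategy in ${\rm xx}_n(p)$. *)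

theory Defs
  imports Complex_Main
begin

definition moves :: "nat \<Rightarrow> nat list set" where
  "moves n = {a. length a = n \<and> set a \<subseteq> {1,2}}"

definition ones :: "nat list \<Rightarrow> nat" where
  "ones a = length (filter (\<lambda>x. x = 1) a)"

text \<open>A strategy for Bob maps the history of all previous moves (interleaved,
  Alice first: a_1, b_1, a_2, b_2, ..., a_k) to Bob's next move.\<close>
fun bob_resp :: "(nat list \<Rightarrow> nat) \<Rightarrow> nat list \<Rightarrow> nat list \<Rightarrow> nat list" where
  "bob_resp \<sigma> h [] = []"
| "bob_resp \<sigma> h (x # xs) =
     \<sigma> (h @ [x]) # bob_resp \<sigma> (h @ [x, \<sigma> (h @ [x])]) xs"

text \<open>Bob has a winning strategy when the set of outcomes won by Bob is S,
  and the outcome of a play (a,b) is out a b.\<close>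
definition bob_wins :: "nat \<Rightarrow> (nat list \<Rightarrow> nat list \<Rightarrow> 'o) \<Rightarrow> 'o set \<Rightarrow> bool" where
  "bob_wins n out S \<longleftrightarrow>
     (\<exists>\<sigma>. (\<forall>h. \<sigma> h \<in> {1,2}) \<and>
          (\<forall>a \<in> moves n. out a (bob_resp \<sigma> [] a) \<in> S))"

definition outcomes :: "nat \<Rightarrow> (nat list \<Rightarrow> nat list \<Rightarrow> 'o) \<Rightarrow> 'o set" where
  "outcomes n out = {out a b | a b. a \<in> moves n \<and> b \<in> moves n}"

text \<open>Probability that Bob has a winning strategy when each outcome is
  independently assigned to Bob with probability p (to Alice with 1-p):
  sum over all possible sets S of Bob-won outcomes.\<close>
definition win_prob :: "nat \<Rightarrow> (nat list \<Rightarrow> nat list \<Rightarrow> 'o) \<Rightarrow> real \<Rightarrow> real" where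
  "win_prob n out p =
     (\<Sum>S \<in> Pow (outcomes n out).
        p ^ card S * (1 - p) ^ (card (outcomes n out) - card S) *
        (if bob_wins n out S then 1 else 0))"

definition P_AB :: "nat \<Rightarrow> real \<Rightarrow> real" where
  "P_AB n p = win_prob n (\<lambda>a b. (a, b)) p"

definition P_Ab :: "nat \<Rightarrow> real \<Rightarrow> real" where
  "P_Ab n p = win_prob n (\<lambda>a b. (a, ones b)) p"

definition P_aB :: "nat \<Rightarrow> real \<Rightarrow> real" where
  "P_aB n p = win_prob n (\<lambda>a b. (ones a, b)) p"

definition P_ab :: "nat \<Rightarrow> real \<Rightarrow> real" where
  "P_ab n p = win_prob n (\<lambda>a b. (ones a, ones b)) p"

end

theory Submission
  imports Defs
begin

(* The event "Bob wins" is monotone in S,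
   and unrolling one round writes it as the conjunction over Alice's first move x of the
   disjunction over Bob's answer y of the four subgame events.  In AB_n the four subgames use
   disjoint sets of outcomes, hence are independent, and P^AB_{k+1} = (1 - (1 - P^AB_k)^2)^2.
   In Ab_n the outcome still reveals Alice's moves, so the halves x = 1, 2 stay independent,
   but Bob's two options may share outcomes; by the Harris inequality they are positively
   correlated, so their disjunction is at most as likely as for independent events, and
   induction gives P^Ab_n <= P^AB_n.  Dually, in aB_n the outcome reveals Bob's moves, so his
   options are independent, while the two halves are positively correlated and their
   conjunction is at least as likely: P^aB_n >= P^AB_n. *)

definition rs_prob :: "real \<Rightarrow> 'a set \<Rightarrow> ('a set \<Rightarrow> bool) \<Rightarrow> real" where
  "rs_prob p U P =
     (\<Sum>S\<in>Pow U. p ^ card S * (1 - p) ^ (card U - card S) * (if P S then 1 else 0))"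

definition depends_on :: "'a set \<Rightarrow> ('a set \<Rightarrow> bool) \<Rightarrow> bool" where
  "depends_on A P \<longleftrightarrow> (\<forall>S. P S = P (S \<inter> A))"

lemma rs_prob_cong: "(\<And>S. S \<subseteq> U \<Longrightarrow> P S = Q S) \<Longrightarrow> rs_prob p U P = rs_prob p U Q"
  unfolding rs_prob_def by (intro sum.cong) auto

lemma rs_prob_singleton: "rs_prob p {x} (\<lambda>S. x \<in> S) = p" "rs_prob p {x} (\<lambda>S. x \<notin> S) = 1 - p"
  by (simp_all add: rs_prob_def Pow_insert)

lemma rs_prob_disj_conj:
  "rs_prob p U (\<lambda>S. P S \<or> Q S) + rs_prob p U (\<lambda>S. P S \<and> Q S) = rs_prob p U P + rs_prob p U Q"
  unfolding rs_prob_def sum.distrib[symmetric] by (rule sum.cong) auto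

lemma rs_prob_disj_exclusive:
  assumes "\<And>S. \<not> (P S \<and> Q S)"
  shows "rs_prob p U (\<lambda>S. P S \<or> Q S) = rs_prob p U P + rs_prob p U Q"
  unfolding rs_prob_def sum.distrib[symmetric] by (rule sum.cong) (use assms in auto)

lemma rs_prob_Un_disjoint:
  assumes "finite A" "finite B" "A \<inter> B = {}"
  shows "rs_prob p (A \<union> B) (\<lambda>S. P (S \<inter> A) \<and> Q (S \<inter> B)) = rs_prob p A P * rs_prob p B Q"
proof -
  define w where "w U S = p ^ card S * (1 - p) ^ (card U - card S)" for U S :: "'a set"
  have bij: "bij_betw (\<lambda>(S, T). S \<union> T) (Pow A \<times> Pow B) (Pow (A \<union> B))"
    by (rule bij_betw_byWitness[where f' = "\<lambda>S. (S \<inter> A, S \<inter> B)"]) (use assms(3) in auto)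
  have w_Un: "w (A \<union> B) (S \<union> T) = w A S * w B T" if "S \<subseteq> A" "T \<subseteq> B" for S T
  proof -
    have "finite S" "finite T" "S \<inter> T = {}" using that assms finite_subset by blast+
    then have "card (S \<union> T) = card S + card T" by (simp add: card_Un_disjoint)
    moreover have "card (A \<union> B) = card A + card B" using assms by (simp add: card_Un_disjoint)
    moreover have "card S \<le> card A" "card T \<le> card B" using that assms by (simp_all add: card_mono)
    ultimately have "card (A \<union> B) - card (S \<union> T) = (card A - card S) + (card B - card T)"
      by simp
    then show ?thesis unfolding w_def \<open>card (S \<union> T) = _\<close> by (simp add: power_add)
  qed
  have "rs_prob p (A \<union> B) (\<lambda>S. P (S \<inter> A) \<and> Q (S \<inter> B))
      = (\<Sum>(S, T)\<in>Pow A \<times> Pow B. w (A \<union> B) (S \<union> T) *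
           (if P ((S \<union> T) \<inter> A) \<and> Q ((S \<union> T) \<inter> B) then 1 else 0))"
    unfolding rs_prob_def w_def sum.reindex_bij_betw[OF bij, symmetric] by (simp add: case_prod_beta)
  also have "\<dots> = (\<Sum>(S, T)\<in>Pow A \<times> Pow B. (w A S * (if P S then 1 else 0)) * (w B T * (if Q T then 1 else 0)))"
  proof (intro sum.cong refl, clarify)
    fix S T assume "S \<subseteq> A" "T \<subseteq> B"
    moreover from this have "(S \<union> T) \<inter> A = S" "(S \<union> T) \<inter> B = T" using assms(3) by auto
    ultimately show "w (A \<union> B) (S \<union> T) * (if P ((S \<union> T) \<inter> A) \<and> Q ((S \<union> T) \<inter> B) then 1 else 0)
        = (w A S * (if P S then 1 else 0)) * (w B T * (if Q T then 1 else 0))"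
      using w_Un by simp
  qed
  also have "\<dots> = rs_prob p A P * rs_prob p B Q"
    unfolding rs_prob_def w_def sum_product sum.cartesian_product by simp
  finally show ?thesis .
qed

lemma rs_prob_True: "finite U \<Longrightarrow> rs_prob p U (\<lambda>_. True) = 1"
proof (induction U rule: finite_induct)
  case (insert x U)
  have "rs_prob p {x} (\<lambda>_. True) = 1" by (simp add: rs_prob_def Pow_insert)
  then show ?case
    using rs_prob_Un_disjoint[of "{x}" U p "\<lambda>_. True" "\<lambda>_. True"] insert by simp
qed (simp add: rs_prob_def)

lemma depends_onD: "depends_on A P \<Longrightarrow> P (S \<inter> A) = P S"
  unfolding depends_on_def by metis

lemma depends_on_mono: "depends_on A P \<Longrightarrow> A \<subseteq> B \<Longrightarrow> depends_on B P"
  unfolding depends_on_def by (metis inf.absorb_iff2 inf_assoc)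

lemma rs_prob_local:
  assumes "finite U" "A \<subseteq> U" "depends_on A P"
  shows "rs_prob p U P = rs_prob p A P"
proof -
  have "rs_prob p U P = rs_prob p (A \<union> (U - A)) (\<lambda>S. P (S \<inter> A) \<and> True)"
    using assms(2) by (simp add: depends_onD[OF assms(3)] Un_absorb1)
  also have "\<dots> = rs_prob p A P"
    using assms(1,2) finite_subset by (subst rs_prob_Un_disjoint) (auto simp: rs_prob_True)
  finally show ?thesis .
qed

lemma rs_prob_indep:
  assumes "finite U" "A \<subseteq> U" "B \<subseteq> U" "A \<inter> B = {}" "depends_on A P" "depends_on B Q"
  shows "rs_prob p U (\<lambda>S. P S \<and> Q S) = rs_prob p U P * rs_prob p U Q"
proof -
  have Q: "depends_on (U - A) Q" using assms(3,4,6) by (elim depends_on_mono) blast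
  have "rs_prob p U (\<lambda>S. P S \<and> Q S) = rs_prob p (A \<union> (U - A)) (\<lambda>S. P (S \<inter> A) \<and> Q (S \<inter> (U - A)))"
    using assms(2) by (simp add: depends_onD[OF assms(5)] depends_onD[OF Q] Un_absorb1)
  also have "\<dots> = rs_prob p A P * rs_prob p (U - A) Q"
    using assms(1,2) finite_subset by (intro rs_prob_Un_disjoint) auto
  also have "\<dots> = rs_prob p U P * rs_prob p U Q"
    using rs_prob_local[OF assms(1) assms(2,5)] rs_prob_local[OF assms(1) _ Q] by simp
  finally show ?thesis .
qed

lemma rs_prob_disj_indep:
  assumes "finite U" "A \<subseteq> U" "B \<subseteq> U" "A \<inter> B = {}" "depends_on A P" "depends_on B Q"
  shows "rs_prob p U (\<lambda>S. P S \<or> Q S) = 1 - (1 - rs_prob p U P) * (1 - rs_prob p U Q)"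
  using rs_prob_disj_conj[of p U P Q] rs_prob_indep[OF assms] by (simp add: algebra_simps)

lemma rs_prob_elem:
  assumes "finite U" "z \<in> U"
  shows "rs_prob p U (\<lambda>S. z \<in> S) = p"
proof -
  have "depends_on {z} (\<lambda>S. z \<in> S)" by (simp add: depends_on_def)
  then have "rs_prob p U (\<lambda>S. z \<in> S) = rs_prob p {z} (\<lambda>S. z \<in> S)"
    using assms by (intro rs_prob_local) auto
  then show ?thesis by (simp add: rs_prob_singleton)
qed

lemma rs_prob_insert:
  assumes "finite U" "x \<notin> U"
  shows "rs_prob p (insert x U) P = p * rs_prob p U (\<lambda>S. P (insert x S)) + (1 - p) * rs_prob p U P"
proof -
  let ?P1 = "\<lambda>S. x \<in> S \<inter> {x} \<and> P (insert x (S \<inter> U))"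
  let ?P0 = "\<lambda>S. x \<notin> S \<inter> {x} \<and> P (S \<inter> U)"
  have decomp: "P S = (?P1 S \<or> ?P0 S)" if "S \<subseteq> insert x U" for S
  proof (cases "x \<in> S")
    case True
    then have "S = insert x (S \<inter> U)" using that by blast
    then show ?thesis using True by auto
  next
    case False
    then have "S = S \<inter> U" using that by blast
    then show ?thesis using False by auto
  qed
  have "rs_prob p (insert x U) P = rs_prob p ({x} \<union> U) (\<lambda>S. ?P1 S \<or> ?P0 S)"
    unfolding insert_is_Un[symmetric] by (rule rs_prob_cong) (rule decomp)
  also have "\<dots> = rs_prob p ({x} \<union> U) ?P1 + rs_prob p ({x} \<union> U) ?P0"
    by (rule rs_prob_disj_exclusive) blast
  also have "\<dots> = p * rs_prob p U (\<lambda>S. P (insert x S)) + (1 - p) * rs_prob p U P"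
    using assms rs_prob_Un_disjoint[of "{x}" U p "\<lambda>T. x \<in> T" "\<lambda>T. P (insert x T)"]
      rs_prob_Un_disjoint[of "{x}" U p "\<lambda>T. x \<notin> T" P]
    by (simp add: rs_prob_singleton)
  finally show ?thesis .
qed

context
  fixes p :: real
  assumes p_nonneg: "0 \<le> p" and p_le_1: "p \<le> 1"
begin

lemma rs_prob_nonneg: "0 \<le> rs_prob p U P"
  unfolding rs_prob_def using p_nonneg p_le_1 by (intro sum_nonneg) auto

lemma rs_prob_mono: "(\<And>S. S \<subseteq> U \<Longrightarrow> P S \<Longrightarrow> Q S) \<Longrightarrow> rs_prob p U P \<le> rs_prob p U Q"
  unfolding rs_prob_def using p_nonneg p_le_1 by (intro sum_mono) auto

lemma rs_prob_le_1: "finite U \<Longrightarrow> rs_prob p U P \<le> 1"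
  using rs_prob_mono[of U P "\<lambda>_. True"] rs_prob_True[of U p] by simp

lemma harris_inequality:
  assumes "finite U" "mono P" "mono Q"
  shows "rs_prob p U P * rs_prob p U Q \<le> rs_prob p U (\<lambda>S. P S \<and> Q S)"
  using assms
proof (induction U arbitrary: P Q rule: finite_induct)
  case empty
  then show ?case by (simp add: rs_prob_def)
next
  case (insert x U)
  define P1 Q1 where "P1 S = P (insert x S)" and "Q1 S = Q (insert x S)" for S
  have "mono P1" "mono Q1"
    using insert.prems unfolding P1_def Q1_def mono_def by (meson insert_mono)+
  then have IH1: "rs_prob p U P1 * rs_prob p U Q1 \<le> rs_prob p U (\<lambda>S. P1 S \<and> Q1 S)"
    by (rule insert.IH)
  have IH0: "rs_prob p U P * rs_prob p U Q \<le> rs_prob p U (\<lambda>S. P S \<and> Q S)"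
    using insert.prems by (rule insert.IH)
  have P01: "rs_prob p U P \<le> rs_prob p U P1" and Q01: "rs_prob p U Q \<le> rs_prob p U Q1"
    using insert.prems unfolding P1_def Q1_def
    by (auto intro!: rs_prob_mono simp: monotone_def) (meson subset_insertI)+
  define a0 a1 b0 b1 where "a0 = rs_prob p U P" and "a1 = rs_prob p U P1"
    and "b0 = rs_prob p U Q" and "b1 = rs_prob p U Q1"
  have "p * (a1 * b1) + (1 - p) * (a0 * b0) - (p * a1 + (1 - p) * a0) * (p * b1 + (1 - p) * b0)
      = p * (1 - p) * ((a1 - a0) * (b1 - b0))"
    by (simp add: algebra_simps)
  also have "\<dots> \<ge> 0"
    using p_nonneg p_le_1 P01 Q01 unfolding a0_def a1_def b0_def b1_def by simp
  finally have cov: "(p * a1 + (1 - p) * a0) * (p * b1 + (1 - p) * b0) \<le> p * (a1 * b1) + (1 - p) * (a0 * b0)"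
    by simp
  have "p * (a1 * b1) \<le> p * rs_prob p U (\<lambda>S. P1 S \<and> Q1 S)"
    using IH1 p_nonneg unfolding a1_def b1_def by (rule mult_left_mono)
  moreover have "(1 - p) * (a0 * b0) \<le> (1 - p) * rs_prob p U (\<lambda>S. P S \<and> Q S)"
    using IH0 p_le_1 unfolding a0_def b0_def by (intro mult_left_mono) auto
  ultimately show ?case
    using cov unfolding rs_prob_insert[OF insert.hyps] a0_def a1_def b0_def b1_def P1_def Q1_def
    by linarith
qed

lemma rs_prob_disj_le:
  assumes "finite U" "mono P" "mono Q"
  shows "rs_prob p U (\<lambda>S. P S \<or> Q S) \<le> 1 - (1 - rs_prob p U P) * (1 - rs_prob p U Q)"
  using rs_prob_disj_conj[of p U P Q] harris_inequality[OF assms] by (simp add: algebra_simps)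

end

lemma moves_0 [simp]: "moves 0 = {[]}"
  by (auto simp: moves_def)

lemma Cons_in_moves_Suc [simp]: "x # a \<in> moves (Suc k) \<longleftrightarrow> x \<in> {1, 2} \<and> a \<in> moves k"
  by (auto simp: moves_def)

lemma moves_SucE:
  assumes "c \<in> moves (Suc k)"
  obtains x a where "c = x # a" "x \<in> {1, 2}" "a \<in> moves k"
  using assms by (cases c) (auto simp: moves_def)

lemma finite_moves: "finite (moves n)"
  unfolding moves_def using finite_lists_length_eq[of "{1::nat, 2}" n] by (simp add: conj_commute)

lemma finite_outcomes: "finite (outcomes n out)"
proof -
  have "outcomes n out = (\<lambda>(a, b). out a b) ` (moves n \<times> moves n)"
    by (auto simp: outcomes_def)
  then show ?thesis using finite_moves by simp
qed

fun bob_forces :: "nat \<Rightarrow> (nat list \<Rightarrow> nat list \<Rightarrow> bool) \<Rightarrow> bool" where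
  "bob_forces 0 G = G [] []"
| "bob_forces (Suc k) G = (\<forall>x\<in>{1, 2}. \<exists>y\<in>{1, 2}. bob_forces k (\<lambda>a b. G (x # a) (y # b)))"

lemma bob_forces_cong:
  "(\<And>a b. a \<in> moves k \<Longrightarrow> b \<in> moves k \<Longrightarrow> G a b = G' a b) \<Longrightarrow> bob_forces k G = bob_forces k G'"
proof (induction k arbitrary: G G')
  case (Suc k)
  have "bob_forces k (\<lambda>a b. G (x # a) (y # b)) = bob_forces k (\<lambda>a b. G' (x # a) (y # b))"
    if "x \<in> {1, 2}" "y \<in> {1, 2}" for x y
    using that by (intro Suc.IH) (simp add: Suc.prems)
  then show ?case by simp
qed simp

lemma bob_forces_mono: "(\<And>a b. G a b \<Longrightarrow> G' a b) \<Longrightarrow> bob_forces k G \<Longrightarrow> bob_forces k G'"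
proof (induction k arbitrary: G G')
  case (Suc k)
  have "bob_forces k (\<lambda>a b. G' (x # a) (y # b))"
    if "bob_forces k (\<lambda>a b. G (x # a) (y # b))" for x y
    using that by (rule Suc.IH[rotated]) (rule Suc.prems(1))
  then show ?case using Suc.prems(2) by auto
qed simp

lemma bob_resp_cong: "(\<And>t. \<sigma> (h @ t) = \<tau> (h @ t)) \<Longrightarrow> bob_resp \<sigma> h a = bob_resp \<tau> h a"
proof (induction a arbitrary: h)
  case (Cons x a)
  have "bob_resp \<sigma> (h @ [x, y]) a = bob_resp \<tau> (h @ [x, y]) a" for y
    by (rule Cons.IH) (metis Cons.prems append.assoc append_Cons append_Nil)
  then show ?case using Cons.prems[of "[x]"] by simp
qed simp

lemma bob_forces_if_strategy:
  assumes "\<forall>h. \<sigma> h \<in> {1, 2}" "\<forall>a\<in>moves k. G a (bob_resp \<sigma> h a)"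
  shows "bob_forces k G"
  using assms(2)
proof (induction k arbitrary: h G)
  case (Suc k)
  show ?case unfolding bob_forces.simps
  proof (intro ballI bexI)
    fix x :: nat assume x: "x \<in> {1, 2}"
    have "G (x # a) (bob_resp \<sigma> h (x # a))" if "a \<in> moves k" for a
      using Suc.prems x that by (simp del: bob_resp.simps)
    then show "bob_forces k (\<lambda>a b. G (x # a) (\<sigma> (h @ [x]) # b))"
      by (intro Suc.IH[where h = "h @ [x, \<sigma> (h @ [x])]"]) simp
  qed (use assms(1) in blast)
qed simp

lemma strategy_if_bob_forces:
  assumes "bob_forces k G"
  shows "\<exists>\<sigma>. (\<forall>h. \<sigma> h \<in> {1, 2}) \<and> (\<forall>a\<in>moves k. G a (bob_resp \<sigma> h a))"
  using assms
proof (induction k arbitrary: h G)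
  case 0
  show ?case by (rule exI[of _ "\<lambda>_. 1"]) (use 0 in simp)
next
  case (Suc k)
  have "\<forall>x\<in>{1, 2}. \<exists>y. y \<in> {1, 2} \<and> bob_forces k (\<lambda>a b. G (x # a) (y # b))"
    using Suc.prems by auto
  then obtain Y where Y: "\<forall>x\<in>{1, 2}. Y x \<in> {1, 2} \<and> bob_forces k (\<lambda>a b. G (x # a) (Y x # b))"
    by (rule bchoice[THEN exE])
  have "\<forall>x\<in>{1, 2}. \<exists>\<tau>. (\<forall>h. \<tau> h \<in> {1, 2}) \<and>
      (\<forall>a\<in>moves k. G (x # a) (Y x # bob_resp \<tau> (h @ [x, Y x]) a))"
  proof
    fix x :: nat assume "x \<in> {1, 2}"
    then have "bob_forces k (\<lambda>a b. G (x # a) (Y x # b))" using Y by blast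
    then show "\<exists>\<tau>. (\<forall>h. \<tau> h \<in> {1, 2}) \<and>
        (\<forall>a\<in>moves k. G (x # a) (Y x # bob_resp \<tau> (h @ [x, Y x]) a))"
      by (rule Suc.IH)
  qed
  then obtain T where T: "\<forall>x\<in>{1, 2}. (\<forall>h. T x h \<in> {1, 2}) \<and>
      (\<forall>a\<in>moves k. G (x # a) (Y x # bob_resp (T x) (h @ [x, Y x]) a))"
    by (rule bchoice[THEN exE])
  \<comment> \<open>After Alice's move \<open>x\<close> (found at position \<open>length h\<close>), answer \<open>Y x\<close> and then follow \<open>T x\<close>.\<close>
  define \<sigma> where "\<sigma> g = (let x = g ! length h in
      if x \<notin> {1, 2} then 1 else if length g = Suc (length h) then Y x else T x g)" for g
  have \<sigma>_first: "\<sigma> (h @ [x]) = Y x" if "x \<in> {1, 2}" for x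
    using that by (auto simp: \<sigma>_def)
  have \<sigma>_later: "bob_resp \<sigma> (h @ [x, Y x]) a = bob_resp (T x) (h @ [x, Y x]) a" if "x \<in> {1, 2}" for x a
    using that by (intro bob_resp_cong) (auto simp: \<sigma>_def nth_append)
  have "\<forall>c\<in>moves (Suc k). G c (bob_resp \<sigma> h c)"
  proof
    fix c assume "c \<in> moves (Suc k)"
    then obtain x a where c: "c = x # a" "x \<in> {1, 2}" "a \<in> moves k" by (rule moves_SucE)
    moreover have "G (x # a) (Y x # bob_resp (T x) (h @ [x, Y x]) a)" using T c(2,3) by blast
    ultimately show "G c (bob_resp \<sigma> h c)" using \<sigma>_first \<sigma>_later by simp
  qed
  moreover have "\<forall>g. \<sigma> g \<in> {1, 2}"
    using Y T by (simp add: \<sigma>_def Let_def)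
  ultimately show ?case by blast
qed

lemma bob_wins_iff_bob_forces: "bob_wins n out S \<longleftrightarrow> bob_forces n (\<lambda>a b. out a b \<in> S)"
proof
  assume "bob_wins n out S"
  then obtain \<sigma> where "\<forall>h. \<sigma> h \<in> {1, 2}" "\<forall>a\<in>moves n. out a (bob_resp \<sigma> [] a) \<in> S"
    unfolding bob_wins_def by blast
  then show "bob_forces n (\<lambda>a b. out a b \<in> S)" by (rule bob_forces_if_strategy)
next
  assume "bob_forces n (\<lambda>a b. out a b \<in> S)"
  then show "bob_wins n out S"
    unfolding bob_wins_def by (rule strategy_if_bob_forces)
qed

lemma bob_wins_0: "bob_wins 0 out S \<longleftrightarrow> out [] [] \<in> S"
  by (simp add: bob_wins_iff_bob_forces)

lemma bob_wins_Suc: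
  "bob_wins (Suc k) out S \<longleftrightarrow> (\<forall>x\<in>{1, 2}. \<exists>y\<in>{1, 2}. bob_wins k (\<lambda>a b. out (x # a) (y # b)) S)"
  by (simp add: bob_wins_iff_bob_forces)

lemma mono_bob_wins: "mono (bob_wins k out)"
proof (intro monoI le_boolI)
  fix S T assume "S \<subseteq> T" "bob_wins k out S"
  then show "bob_wins k out T"
    unfolding bob_wins_iff_bob_forces by (elim bob_forces_mono[rotated]) blast
qed

lemma bob_wins_depends_on_outcomes: "depends_on (outcomes k out) (bob_wins k out)"
  unfolding depends_on_def bob_wins_iff_bob_forces
proof
  fix S
  show "bob_forces k (\<lambda>a b. out a b \<in> S) = bob_forces k (\<lambda>a b. out a b \<in> S \<inter> outcomes k out)"
    by (rule bob_forces_cong) (auto simp: outcomes_def)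
qed

definition determines_alice :: "nat \<Rightarrow> (nat list \<Rightarrow> nat list \<Rightarrow> 'o) \<Rightarrow> bool" where
  "determines_alice k out \<longleftrightarrow>
     (\<forall>a\<in>moves k. \<forall>b\<in>moves k. \<forall>a'\<in>moves k. \<forall>b'\<in>moves k. out a b = out a' b' \<longrightarrow> a = a')"

definition determines_bob :: "nat \<Rightarrow> (nat list \<Rightarrow> nat list \<Rightarrow> 'o) \<Rightarrow> bool" where
  "determines_bob k out \<longleftrightarrow>
     (\<forall>a\<in>moves k. \<forall>b\<in>moves k. \<forall>a'\<in>moves k. \<forall>b'\<in>moves k. out a b = out a' b' \<longrightarrow> b = b')"

lemma determines_alice_Cons:
  assumes "determines_alice (Suc k) out" "x \<in> {1, 2}" "y \<in> {1, 2}"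
  shows "determines_alice k (\<lambda>a b. out (x # a) (y # b))"
  using assms unfolding determines_alice_def by (metis Cons_in_moves_Suc list.inject)

lemma determines_bob_Cons:
  assumes "determines_bob (Suc k) out" "x \<in> {1, 2}" "y \<in> {1, 2}"
  shows "determines_bob k (\<lambda>a b. out (x # a) (y # b))"
  using assms unfolding determines_bob_def by (metis Cons_in_moves_Suc list.inject)

lemma outcomes_Cons_subset:
  assumes "x \<in> {1, 2}" "y \<in> {1, 2}"
  shows "outcomes k (\<lambda>a b. out (x # a) (y # b)) \<subseteq> outcomes (Suc k) out"
  using assms unfolding outcomes_def by force

lemma determines_alice_outcomes_disjoint:
  assumes "determines_alice (Suc k) out" "x \<in> {1, 2}" "y \<in> {1, 2}" "x' \<in> {1, 2}" "y' \<in> {1, 2}" "x \<noteq> x'"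
  shows "outcomes k (\<lambda>a b. out (x # a) (y # b)) \<inter> outcomes k (\<lambda>a b. out (x' # a) (y' # b)) = {}"
  using assms unfolding determines_alice_def outcomes_def by fastforce

lemma determines_bob_outcomes_disjoint:
  assumes "determines_bob (Suc k) out" "x \<in> {1, 2}" "y \<in> {1, 2}" "x' \<in> {1, 2}" "y' \<in> {1, 2}" "y \<noteq> y'"
  shows "outcomes k (\<lambda>a b. out (x # a) (y # b)) \<inter> outcomes k (\<lambda>a b. out (x' # a) (y' # b)) = {}"
  using assms unfolding determines_bob_def outcomes_def by fastforce

lemma depends_on_disj:
  assumes "depends_on A P" "depends_on B Q"
  shows "depends_on (A \<union> B) (\<lambda>S. P S \<or> Q S)"
proof -
  have "depends_on (A \<union> B) P" "depends_on (A \<union> B) Q"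
    using assms by (auto elim: depends_on_mono)
  then show ?thesis unfolding depends_on_def by metis
qed

fun AB_value :: "real \<Rightarrow> nat \<Rightarrow> real" where
  "AB_value p 0 = p"
| "AB_value p (Suc k) = (1 - (1 - AB_value p k)\<^sup>2)\<^sup>2"

lemma AB_value_bounds: "0 \<le> p \<Longrightarrow> p \<le> 1 \<Longrightarrow> 0 \<le> AB_value p k \<and> AB_value p k \<le> 1"
  by (induction k) (simp_all add: power_le_one)

lemma one_minus_prod_mono:
  fixes e1 e2 e1' e2' :: real
  assumes "e1 \<le> e1'" "e2 \<le> e2'" "e1' \<le> 1" "e2' \<le> 1"
  shows "1 - (1 - e1) * (1 - e2) \<le> 1 - (1 - e1') * (1 - e2')"
proof -
  have "(1 - e1') * (1 - e2') \<le> (1 - e1) * (1 - e2)"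
    using assms by (intro mult_mono) auto
  then show ?thesis by simp
qed

lemma mono_disj: "mono P \<Longrightarrow> mono Q \<Longrightarrow> mono (\<lambda>S. P S \<or> Q S)"
  unfolding mono_def le_bool_def by blast

lemma win_prob_eq_rs_prob: "win_prob n out p = rs_prob p (outcomes n out) (bob_wins n out)"
  unfolding win_prob_def rs_prob_def ..

context
  fixes p :: real
  assumes p_nonneg: "0 \<le> p" and p_le_1: "p \<le> 1"
begin

lemma rs_prob_bob_wins_0:
  assumes "finite U" "outcomes 0 out \<subseteq> U"
  shows "rs_prob p U (bob_wins 0 out) = AB_value p 0"
proof -
  have "bob_wins 0 out = (\<lambda>S. out [] [] \<in> S)" by (simp add: bob_wins_0 fun_eq_iff)
  moreover have "out [] [] \<in> U" using assms(2) by (simp add: outcomes_def)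
  ultimately show ?thesis using rs_prob_elem[OF assms(1)] by simp
qed

lemma rs_prob_bob_wins_le_AB_value:
  assumes "finite U" "outcomes k out \<subseteq> U" "determines_alice k out"
  shows "rs_prob p U (bob_wins k out) \<le> AB_value p k"
  using assms(2,3)
proof (induction k arbitrary: out)
  case 0
  then show ?case using rs_prob_bob_wins_0[OF assms(1)] by simp
next
  case (Suc k)
  define f where "f = AB_value p k"
  define A where "A x y = outcomes k (\<lambda>a b. out (x # a) (y # b))" for x y
  define E where "E x y = bob_wins k (\<lambda>a b. out (x # a) (y # b))" for x y
  define W where "W x S = (E x 1 S \<or> E x 2 S)" for x S
  have f: "0 \<le> f" "f \<le> 1" using AB_value_bounds[OF p_nonneg p_le_1] by (auto simp: f_def)
  have A_U: "A x y \<subseteq> U" if "x \<in> {1, 2}" "y \<in> {1, 2}" for x y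
    unfolding A_def using outcomes_Cons_subset[OF that] Suc.prems(1) by (rule subset_trans)
  have E_le: "rs_prob p U (E x y) \<le> f" if "x \<in> {1, 2}" "y \<in> {1, 2}" for x y
    unfolding E_def f_def
    using A_U[OF that] determines_alice_Cons[OF Suc.prems(2) that] unfolding A_def by (rule Suc.IH)
  have W_le: "rs_prob p U (W x) \<le> 1 - (1 - f) * (1 - f)" if "x \<in> {1, 2}" for x
  proof -
    have "rs_prob p U (W x) \<le> 1 - (1 - rs_prob p U (E x 1)) * (1 - rs_prob p U (E x 2))"
      unfolding W_def E_def using assms(1) by (intro rs_prob_disj_le[OF p_nonneg p_le_1] mono_bob_wins)
    also have "\<dots> \<le> 1 - (1 - f) * (1 - f)"
      using E_le[OF that] f by (intro one_minus_prod_mono) auto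
    finally show ?thesis .
  qed
  have "rs_prob p U (\<lambda>S. W 1 S \<and> W 2 S) = rs_prob p U (W 1) * rs_prob p U (W 2)"
  proof (rule rs_prob_indep[OF assms(1)])
    show "A 1 1 \<union> A 1 2 \<subseteq> U" "A 2 1 \<union> A 2 2 \<subseteq> U" using A_U by auto
    show "(A 1 1 \<union> A 1 2) \<inter> (A 2 1 \<union> A 2 2) = {}"
      using determines_alice_outcomes_disjoint[OF Suc.prems(2)] unfolding A_def by (simp add: Int_Un_distrib Int_Un_distrib2)
    have dep: "depends_on (A x 1 \<union> A x 2) (W x)" for x
      unfolding W_def E_def A_def by (intro depends_on_disj bob_wins_depends_on_outcomes)
    show "depends_on (A 1 1 \<union> A 1 2) (W 1)" "depends_on (A 2 1 \<union> A 2 2) (W 2)" by (rule dep)+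
  qed
  also have "\<dots> \<le> (1 - (1 - f) * (1 - f)) * (1 - (1 - f) * (1 - f))"
    using W_le f by (intro mult_mono rs_prob_nonneg[OF p_nonneg p_le_1]) (auto simp: mult_le_one)
  finally show ?case
    unfolding bob_wins_Suc[abs_def] W_def E_def f_def by (simp add: power2_eq_square)
qed

lemma rs_prob_bob_wins_ge_AB_value:
  assumes "finite U" "outcomes k out \<subseteq> U" "determines_bob k out"
  shows "AB_value p k \<le> rs_prob p U (bob_wins k out)"
  using assms(2,3)
proof (induction k arbitrary: out)
  case 0
  then show ?case using rs_prob_bob_wins_0[OF assms(1)] by simp
next
  case (Suc k)
  define f where "f = AB_value p k"
  define A where "A x y = outcomes k (\<lambda>a b. out (x # a) (y # b))" for x y
  define E where "E x y = bob_wins k (\<lambda>a b. out (x # a) (y # b))" for x y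
  define W where "W x S = (E x 1 S \<or> E x 2 S)" for x S
  have f: "0 \<le> f" "f \<le> 1" using AB_value_bounds[OF p_nonneg p_le_1] by (auto simp: f_def)
  have A_U: "A x y \<subseteq> U" if "x \<in> {1, 2}" "y \<in> {1, 2}" for x y
    unfolding A_def using outcomes_Cons_subset[OF that] Suc.prems(1) by (rule subset_trans)
  have E_ge: "f \<le> rs_prob p U (E x y)" if "x \<in> {1, 2}" "y \<in> {1, 2}" for x y
    unfolding E_def f_def
    using A_U[OF that] determines_bob_Cons[OF Suc.prems(2) that] unfolding A_def by (rule Suc.IH)
  have W_ge: "1 - (1 - f) * (1 - f) \<le> rs_prob p U (W x)" if "x \<in> {1, 2}" for x
  proof -
    have "1 - (1 - f) * (1 - f) \<le> 1 - (1 - rs_prob p U (E x 1)) * (1 - rs_prob p U (E x 2))"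
      using E_ge[OF that] rs_prob_le_1[OF p_nonneg p_le_1 assms(1)] by (intro one_minus_prod_mono) auto
    also have "\<dots> = rs_prob p U (W x)"
      unfolding W_def
    proof (rule rs_prob_disj_indep[OF assms(1), symmetric])
      show "A x 1 \<subseteq> U" "A x 2 \<subseteq> U" using A_U that by auto
      show "A x 1 \<inter> A x 2 = {}"
        unfolding A_def using determines_bob_outcomes_disjoint[OF Suc.prems(2)] that by simp
      show "depends_on (A x 1) (E x 1)" "depends_on (A x 2) (E x 2)"
        unfolding A_def E_def by (rule bob_wins_depends_on_outcomes)+
    qed
    finally show ?thesis .
  qed
  have "(1 - (1 - f) * (1 - f)) * (1 - (1 - f) * (1 - f)) \<le> rs_prob p U (W 1) * rs_prob p U (W 2)"
    using W_ge f by (intro mult_mono rs_prob_nonneg[OF p_nonneg p_le_1]) (auto simp: mult_le_one)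
  also have "\<dots> \<le> rs_prob p U (\<lambda>S. W 1 S \<and> W 2 S)"
    unfolding W_def E_def
    by (intro harris_inequality[OF p_nonneg p_le_1 assms(1)] mono_disj mono_bob_wins)
  finally show ?case
    unfolding bob_wins_Suc[abs_def] W_def E_def f_def by (simp add: power2_eq_square)
qed

lemma win_prob_le_AB_value: "determines_alice n out \<Longrightarrow> win_prob n out p \<le> AB_value p n"
  unfolding win_prob_eq_rs_prob by (rule rs_prob_bob_wins_le_AB_value[OF finite_outcomes order_refl])

lemma AB_value_le_win_prob: "determines_bob n out \<Longrightarrow> AB_value p n \<le> win_prob n out p"
  unfolding win_prob_eq_rs_prob by (rule rs_prob_bob_wins_ge_AB_value[OF finite_outcomes order_refl])

lemma P_AB_eq_AB_value: "P_AB n p = AB_value p n"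
proof -
  have "determines_alice n (\<lambda>a b. (a, b))" "determines_bob n (\<lambda>a b. (a, b))"
    by (simp_all add: determines_alice_def determines_bob_def)
  then show ?thesis
    unfolding P_AB_def using win_prob_le_AB_value AB_value_le_win_prob by (meson order_antisym)
qed

end

theorem proposition1:
  fixes p :: real and n :: nat
  assumes "0 \<le> p" and "p \<le> 1" and "n \<ge> 1"
  shows "P_Ab n p \<le> P_AB n p \<and> P_aB n p \<ge> P_AB n p"
proof -
  have "determines_alice n (\<lambda>a b. (a, ones b))" "determines_bob n (\<lambda>a b. (ones a, b))"
    by (simp_all add: determines_alice_def determines_bob_def)
  then show ?thesis
    unfolding P_Ab_def P_aB_def P_AB_eq_AB_value[OF assms(1,2)]
    using win_prob_le_AB_value[OF assms(1,2)] AB_value_le_win_prob[OF assms(1,2)] by blast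
qed

end
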